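(* If $X$ is a connected, locally $\mathfrak{c}$, sequential Hausdorff space, then $|X|\le\mathfrak{c}$.
   Context: A space $X$ is locally $\mathfrak{c}$ if every point of $X$ has a neighbourhood of cardinality $\le\mathfrak{c}$. *)

theory Defs
  imports "HOL-Analysis.Analysis" "HOL-Library.Equipollence"
begin

definition sequentially_closedin :: "'a topology \<Rightarrow> 'a set \<Rightarrow> bool" where
  "sequentially_closedin X S \<longleftrightarrow>
     (\<forall>(\<sigma>::nat \<Rightarrow> 'a) l. (\<forall>n. \<sigma> n \<in> S) \<and> limitin X \<sigma> l sequentially \<longrightarrow> l \<in> S)"

definition sequential_space :: "'a topology \<Rightarrow> bool" where
  "sequential_space X \<longleftrightarrow>
     (\<forall>S. S \<subseteq> topspace X \<and> sequentially_closedin X S \<longrightarrow> closedin X S)"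

definition locally_continuum :: "'a topology \<Rightarrow> bool" where
  "locally_continuum X \<longleftrightarrow>
     (\<forall>x\<in>topspace X. \<exists>N. N \<subseteq> topspace X \<and> x \<in> X interior_of N \<and> N \<lesssim> (UNIV :: real set))"

end

theory Submission
  imports Defs
begin

text \<open>
  Fix a point \<open>x\<^sub>0\<close> and, for every point \<open>z\<close>, a neighbourhood \<open>N z\<close> of cardinality at most
  \<open>\<cc>\<close> together with an injection of it into \<open>\<P>(\<nat>)\<close>. Call a point derivable if it is reached
  from \<open>x\<^sub>0\<close> by a well-founded, countably branching derivation whose steps either pass from a
  derivable point into its neighbourhood or take the sequential limit of derivable points.
  The derivable points form an open set, and a sequentially closed one, hence a clopen set,
  which by connectedness is all of \<open>X\<close>. Since limits in a Hausdorff space are unique, a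
  derivation determines its end point, and a derivation can be coded as a function from
  finite sequences of naturals to \<open>\<nat> \<times> \<P>(\<nat>)\<close>; there are only \<open>\<cc>\<close> such codes.
\<close>

lemma countable_sets_lepoll_reals: "(UNIV :: 'a::countable set set) \<lesssim> (UNIV :: real set)"
proof -
  have "inj (image (to_nat :: 'a \<Rightarrow> nat))"
    by (simp add: inj_def inj_image_eq_iff[OF inj_to_nat])
  then have "(UNIV :: 'a set set) \<lesssim> (UNIV :: nat set set)"
    unfolding lepoll_def by blast
  also have "\<dots> \<lesssim> (UNIV :: real set)"
    using eqpoll_imp_lepoll nat_sets_eqpoll_reals by blast
  finally show ?thesis .
qed

lemma derivation_codes_lepoll_reals:
  "(UNIV :: (nat list \<Rightarrow> nat \<times> nat set) set) \<lesssim> (UNIV :: real set)"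
proof -
  define graph where "graph t = {(l, Inl (fst (t l)) :: nat + nat) |l. True}
      \<union> {(l, Inr k) |l k. k \<in> snd (t l)}" for t :: "nat list \<Rightarrow> nat \<times> nat set"
  have mem: "(l, Inl n) \<in> graph t \<longleftrightarrow> n = fst (t l)" "(l, Inr k) \<in> graph t \<longleftrightarrow> k \<in> snd (t l)"
    for t l n k
    unfolding graph_def by auto
  have "inj graph"
  proof (rule injI)
    fix t t' assume eq: "graph t = graph t'"
    show "t = t'"
    proof
      fix l
      have "fst (t l) = fst (t' l)"
        using mem(1)[of l "fst (t l)" t] mem(1)[of l "fst (t l)" t'] eq by simp
      moreover have "snd (t l) = snd (t' l)"
        using mem(2)[of l _ t] mem(2)[of l _ t'] eq by (simp add: set_eq_iff)
      ultimately show "t l = t' l"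
        by (simp add: prod_eq_iff)
    qed
  qed
  then have "(UNIV :: (nat list \<Rightarrow> nat \<times> nat set) set) \<lesssim> (UNIV :: (nat list \<times> (nat + nat)) set set)"
    unfolding lepoll_def by blast
  also have "\<dots> \<lesssim> (UNIV :: real set)"
    by (rule countable_sets_lepoll_reals)
  finally show ?thesis .
qed

inductive derivation :: "'a topology \<Rightarrow> 'a \<Rightarrow> ('a \<Rightarrow> 'a set) \<Rightarrow> ('a \<Rightarrow> 'a \<Rightarrow> nat set)
    \<Rightarrow> (nat list \<Rightarrow> nat \<times> nat set) \<Rightarrow> 'a \<Rightarrow> bool"
  for X x0 N g where
  start: "t [] = (0, {}) \<Longrightarrow> derivation X x0 N g t x0"
| neighbour: "derivation X x0 N g (\<lambda>l. t (0 # l)) z \<Longrightarrow> y \<in> N z \<Longrightarrow> t [] = (1, g z y)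
    \<Longrightarrow> derivation X x0 N g t y"
| limit: "(\<And>n. derivation X x0 N g (\<lambda>l. t (n # l)) (\<sigma> n)) \<Longrightarrow> limitin X \<sigma> y sequentially
    \<Longrightarrow> t [] = (2, {}) \<Longrightarrow> derivation X x0 N g t y"

lemma derivation_unique:
  assumes "Hausdorff_space X" and "\<And>z. inj_on (g z) (N z)"
  shows "derivation X x0 N g t y \<Longrightarrow> derivation X x0 N g t y' \<Longrightarrow> y = y'"
proof (induction t y arbitrary: y' rule: derivation.induct)
  case (start t)
  from start.prems show ?case
    by cases (use start.hyps in auto)
next
  case (neighbour t z y)
  from neighbour.prems show ?case
  proof cases
    case (neighbour z')
    with neighbour.IH have "z = z'" by blast
    with neighbour neighbour.hyps have "g z y = g z y'" and "y \<in> N z" and "y' \<in> N z"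
      by simp_all
    then show ?thesis
      using inj_onD[OF assms(2)] by blast
  qed (use neighbour.hyps in auto)
next
  case (limit t \<sigma> y)
  from limit.prems show ?case
  proof cases
    case (limit \<sigma>')
    have "\<sigma> = \<sigma>'"
    proof
      fix n
      show "\<sigma> n = \<sigma>' n"
        using limit limit.IH by blast
    qed
    with limit limit.hyps show ?thesis
      using limitin_Hausdorff_unique[OF _ _ trivial_limit_sequentially assms(1)] by blast
  qed (use limit.hyps in auto)
qed

lemma derivation_in_topspace:
  assumes "x0 \<in> topspace X" and "\<And>z. N z \<subseteq> topspace X"
  shows "derivation X x0 N g t y \<Longrightarrow> y \<in> topspace X"
  by (induction rule: derivation.induct) (use assms limitin_topspace in auto)

definition derivable :: "'a topology \<Rightarrow> 'a \<Rightarrow> ('a \<Rightarrow> 'a set) \<Rightarrow> ('a \<Rightarrow> 'a \<Rightarrow> nat set) \<Rightarrow> 'a set"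
  where "derivable X x0 N g = {y. \<exists>t. derivation X x0 N g t y}"

lemma start_derivable: "x0 \<in> derivable X x0 N g"
  unfolding derivable_def using derivation.start[of "\<lambda>_. (0, {})" X x0 N g] by auto

lemma neighbourhood_subset_derivable:
  assumes "z \<in> derivable X x0 N g"
  shows "N z \<subseteq> derivable X x0 N g"
proof
  fix y assume "y \<in> N z"
  obtain t where t: "derivation X x0 N g t z"
    using assms unfolding derivable_def by blast
  have "derivation X x0 N g (\<lambda>l. case l of [] \<Rightarrow> (1, g z y) | _ # l' \<Rightarrow> t l') y"
    by (rule derivation.neighbour[where z=z]) (simp_all add: t \<open>y \<in> N z\<close>)
  then show "y \<in> derivable X x0 N g"
    unfolding derivable_def by blast
qed

lemma sequentially_closedin_derivable: "sequentially_closedin X (derivable X x0 N g)"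
  unfolding sequentially_closedin_def
proof (intro allI impI, elim conjE)
  fix \<sigma> :: "nat \<Rightarrow> 'a" and y
  assume "\<forall>n. \<sigma> n \<in> derivable X x0 N g" and lim: "limitin X \<sigma> y sequentially"
  then obtain T where T: "\<And>n. derivation X x0 N g (T n) (\<sigma> n)"
    unfolding derivable_def by (auto dest!: choice)
  have "derivation X x0 N g (\<lambda>l. case l of [] \<Rightarrow> (2, {}) | n # l' \<Rightarrow> T n l') y"
    by (rule derivation.limit[OF _ lim]) (simp_all add: T)
  then show "y \<in> derivable X x0 N g"
    unfolding derivable_def by blast
qed

lemma derivable_lepoll_reals:
  assumes "Hausdorff_space X" and "\<And>z. inj_on (g z) (N z)"
  shows "derivable X x0 N g \<lesssim> (UNIV :: real set)"
proof -
  let ?codes = "{t. \<exists>y. derivation X x0 N g t y}"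
  have the_endpoint: "(THE y. derivation X x0 N g t y) = y" if "derivation X x0 N g t y" for t y
    using that derivation_unique[of X g N x0] assms by (blast intro: the_equality)
  have "derivable X x0 N g = (\<lambda>t. THE y. derivation X x0 N g t y) ` ?codes"
  proof (intro equalityI subsetI)
    fix y assume "y \<in> derivable X x0 N g"
    then obtain t where t: "derivation X x0 N g t y"
      unfolding derivable_def by blast
    then have "y = (THE y. derivation X x0 N g t y)"
      by (simp add: the_endpoint)
    with t show "y \<in> (\<lambda>t. THE y. derivation X x0 N g t y) ` ?codes"
      by blast
  qed (use the_endpoint in \<open>auto simp: derivable_def\<close>)
  also have "\<dots> \<lesssim> ?codes"
    by (rule image_lepoll)
  also have "\<dots> \<lesssim> (UNIV :: (nat list \<Rightarrow> nat \<times> nat set) set)"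
    by (rule subset_imp_lepoll) simp
  also have "\<dots> \<lesssim> (UNIV :: real set)"
    by (rule derivation_codes_lepoll_reals)
  finally show ?thesis .
qed

lemma derivable_eq_topspace:
  assumes "connected_space X" and "sequential_space X" and "x0 \<in> topspace X"
    and "\<And>z. N z \<subseteq> topspace X" and "\<And>z. z \<in> topspace X \<Longrightarrow> z \<in> X interior_of N z"
  shows "derivable X x0 N g = topspace X"
proof -
  let ?D = "derivable X x0 N g"
  have sub: "?D \<subseteq> topspace X"
    using derivation_in_topspace[of x0 X N g, OF assms(3,4)] unfolding derivable_def by blast
  have "openin X ?D"
  proof (subst openin_subopen, intro ballI)
    fix z assume "z \<in> ?D"
    have "X interior_of N z \<subseteq> ?D"
      using interior_of_subset neighbourhood_subset_derivable[OF \<open>z \<in> ?D\<close>] by (rule order_trans)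
    moreover have "z \<in> X interior_of N z"
      using \<open>z \<in> ?D\<close> sub by (intro assms(5)) blast
    ultimately show "\<exists>T. openin X T \<and> z \<in> T \<and> T \<subseteq> ?D"
      using openin_interior_of by blast
  qed
  moreover have "closedin X ?D"
    using assms(2) sub sequentially_closedin_derivable[of X x0 N g]
    unfolding sequential_space_def by blast
  ultimately show ?thesis
    using assms(1) start_derivable[of x0 X N g] unfolding connected_space_clopen_in by blast
qed

lemma locally_continuum_neighbourhood_codes:
  assumes "locally_continuum X"
  obtains N :: "'a \<Rightarrow> 'a set" and g :: "'a \<Rightarrow> 'a \<Rightarrow> nat set"
  where "\<And>z. N z \<subseteq> topspace X" and "\<And>z. z \<in> topspace X \<Longrightarrow> z \<in> X interior_of N z"
    and "\<And>z. inj_on (g z) (N z)"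
proof -
  have "\<exists>N. N \<subseteq> topspace X \<and> (z \<in> topspace X \<longrightarrow> z \<in> X interior_of N) \<and> N \<lesssim> (UNIV :: real set)"
    for z
    using assms unfolding locally_continuum_def by (cases "z \<in> topspace X") (auto simp: lepoll_def)
  then obtain N where N: "\<And>z. N z \<subseteq> topspace X" "\<And>z. z \<in> topspace X \<Longrightarrow> z \<in> X interior_of N z"
    and small: "\<And>z. N z \<lesssim> (UNIV :: real set)"
    by metis
  have "N z \<lesssim> (UNIV :: nat set set)" for z
    using small lepoll_trans2 eqpoll_sym nat_sets_eqpoll_reals by blast
  then obtain g :: "'a \<Rightarrow> 'a \<Rightarrow> nat set" where "\<And>z. inj_on (g z) (N z)"
    unfolding lepoll_def by metis
  with N that show ?thesis by blast
qed

theorem corollary4p4: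
  fixes X :: "'a topology"
  assumes "connected_space X" and "locally_continuum X"
    and "sequential_space X" and "Hausdorff_space X"
  shows "topspace X \<lesssim> (UNIV :: real set)"
proof (cases "topspace X = {}")
  case True
  then show ?thesis by (simp add: lepoll_def)
next
  case False
  then obtain x0 where x0: "x0 \<in> topspace X" by blast
  obtain N and g :: "'a \<Rightarrow> 'a \<Rightarrow> nat set"
    where N: "\<And>z. N z \<subseteq> topspace X" "\<And>z. z \<in> topspace X \<Longrightarrow> z \<in> X interior_of N z"
    and g: "\<And>z. inj_on (g z) (N z)"
    using locally_continuum_neighbourhood_codes[OF assms(2)] by blast
  have "topspace X = derivable X x0 N g"
    by (rule derivable_eq_topspace[of X x0 N g, OF assms(1,3) x0 N, symmetric])
  also have "\<dots> \<lesssim> (UNIV :: real set)"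
    by (rule derivable_lepoll_reals[of X g N x0, OF assms(4) g])
  finally show ?thesis .
qed

end
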